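(* With $\mathcal{L}^\ddagger$ as defined below, set $\Gamma_T=\frac{\gamma_++\gamma_-}{2}+2\gamma_z$, $\Gamma_L=\gamma_++\gamma_-$ and $\delta=\gamma_+-\gamma_-$. Then $e^{t\mathcal{L}^\ddagger}$ is a unital Schwarz map for every $t\ge0$ if and only if $$\Gamma_L\ge|\delta|\quad\text{and}\quad \tfrac12(\Gamma_L-|\delta|)+2\Gamma_T-\Gamma_L\ge 0 .$$
   Context: For $\omega,\gamma_+,\gamma_-,\gamma_z\in\mathbb{R}$, $\mathcal{L}^\ddagger:\mathcal{M}_2\to\mathcal{M}_2$ is $\mathcal{L}^\ddagger(X)=\tfrac{i\omega}{2}[\sigma_z,X]+\gamma_+(\sigma_-X\sigma_+-\tfrac12\{\sigma_-\sigma_+,X\})+\gamma_-(\sigma_+X\sigma_--\tfrac12\{\sigma_+\sigma_-,X\})+\gamma_z(\sigma_zX\sigma_z-X)$, where $\sigma_x,\sigma_y,\sigma_z$ are the Pauli matrices and $\sigma_\pm=\frac12(\sigma_x\pm i\sigma_y)$. $\Gamma_T$ (transversal) and $\Gamma_L$ (longitudinal) are the relaxation rates: the Schrödinger-picture generator $\mathcal{L}$ satisfies $\mathcal{L}(\sigma_\pm)=(\mp i\omega-\Gamma_T)\sigma_\pm$, $\mathcal{L}(\sigma_z)=-\Gamma_L\sigma_z$. A unital Schwarz map on $\mathcal{M}_n$ is a linear map $\Phi$ with $\Phi(\mathbb{1})=\mathbb{1}$ and $\Phi(X^\dagger X)\ge\Phi(X)^\dagger\Phi(X)$ for all $X$.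 *)

theory Defs
  imports "HOL-Analysis.Analysis"
begin

type_synonym cmat2 = "complex^2^2"

definition mat2 :: "complex \<Rightarrow> complex \<Rightarrow> complex \<Rightarrow> complex \<Rightarrow> cmat2" where
  "mat2 a b c d = (\<chi> i j. if i = 0 then (if j = 0 then a else b) else (if j = 0 then c else d))"

definition cscale :: "complex \<Rightarrow> cmat2 \<Rightarrow> cmat2" where
  "cscale c A = (\<chi> i j. c * A $ i $ j)"

definition adj :: "cmat2 \<Rightarrow> cmat2" where
  "adj A = (\<chi> i j. cnj (A $ j $ i))"

definition sigma_x :: cmat2 where "sigma_x = mat2 0 1 1 0"
definition sigma_y :: cmat2 where "sigma_y = mat2 0 (- \<i>) \<i> 0"
definition sigma_z :: cmat2 where "sigma_z = mat2 1 0 0 (-1)"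
definition sigma_plus :: cmat2 where "sigma_plus = cscale (1/2) (sigma_x + cscale \<i> sigma_y)"
definition sigma_minus :: cmat2 where "sigma_minus = cscale (1/2) (sigma_x - cscale \<i> sigma_y)"

definition commutator :: "cmat2 \<Rightarrow> cmat2 \<Rightarrow> cmat2" where
  "commutator A B = A ** B - B ** A"
definition anticommutator :: "cmat2 \<Rightarrow> cmat2 \<Rightarrow> cmat2" where
  "anticommutator A B = A ** B + B ** A"

definition Ldag :: "real \<Rightarrow> real \<Rightarrow> real \<Rightarrow> real \<Rightarrow> cmat2 \<Rightarrow> cmat2" where
  "Ldag \<omega> gp gm gz X =
     cscale (\<i> * complex_of_real \<omega> / 2) (commutator sigma_z X)
   + cscale (complex_of_real gp)
       (sigma_minus ** X ** sigma_plus - cscale (1/2) (anticommutator (sigma_minus ** sigma_plus) X))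
   + cscale (complex_of_real gm)
       (sigma_plus ** X ** sigma_minus - cscale (1/2) (anticommutator (sigma_plus ** sigma_minus) X))
   + cscale (complex_of_real gz) (sigma_z ** X ** sigma_z - X)"

definition expL :: "real \<Rightarrow> (cmat2 \<Rightarrow> cmat2) \<Rightarrow> cmat2 \<Rightarrow> cmat2" where
  "expL t L X = (\<Sum>n. (t ^ n / fact n) *\<^sub>R (L ^^ n) X)"

definition psd :: "cmat2 \<Rightarrow> bool" where
  "psd A \<longleftrightarrow> (\<forall>v :: complex^2. let q = (\<Sum>i\<in>UNIV. cnj (v $ i) * (A *v v) $ i)
                                  in Im q = 0 \<and> Re q \<ge> 0)"

definition unital_schwarz :: "(cmat2 \<Rightarrow> cmat2) \<Rightarrow> bool" where
  "unital_schwarz \<Phi> \<longleftrightarrow>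
     (\<forall>X Y. \<Phi> (X + Y) = \<Phi> X + \<Phi> Y) \<and> (\<forall>c X. \<Phi> (cscale c X) = cscale c (\<Phi> X)) \<and>
     \<Phi> (mat 1) = mat 1 \<and>
     (\<forall>X. psd (\<Phi> (adj X ** X) - adj (\<Phi> X) ** \<Phi> X))"

end

theory Submission
  imports Defs
begin

(* In the basis of sigma_z the generator maps coherences to themselves, X01 \<mapsto> \<mu> X01 with
   \<mu> = i\<omega> - \<Gamma>_T, and populations to populations with rates gm and gp.  Hence e^{t Ldag} is the
   phase-covariant map
     X \<mapsto> [[X00 + \<alpha>(X11 - X00), \<lambda> X01], [cnj \<lambda> X10, X11 + \<beta>(X00 - X11)]]
   with \<alpha> = gm f(t), \<beta> = gp f(t), \<lambda> = e^{t\<mu>} and f(t) = \<integral>_0^t e^{-\<Gamma>_L s} ds.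
   The Schwarz defect of such a map is a Hermitian matrix [[P, Q], [cnj Q, R]], and a
   sum-of-squares identity shows that it is positive for all X iff \<alpha>, \<beta> \<ge> 0 and
   |\<lambda>|^2 \<le> 1 - \<alpha>, 1 - \<beta>.  As |\<lambda>|^2 = e^{-(\<Gamma>_L + 4 gz) t}, convexity of exp (and, for the
   converse, the derivative at t = 0) shows that these inequalities hold for all t \<ge> 0 iff
   gp, gm \<ge> 0 and gp + 4 gz, gm + 4 gz \<ge> 0, i.e. \<Gamma>_L \<ge> |\<delta>| and min(gp, gm) + 4 gz \<ge> 0. *)

lemma exhaust_2_zero_one: "(i :: 2) = 0 \<or> i = 1"
  using exhaust_2[of i] by auto

lemma UNIV_2_eq_0_1: "(UNIV :: 2 set) = {0, 1}"
  using exhaust_2_zero_one by auto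

lemma sum_UNIV_2: "(\<Sum>i\<in>(UNIV :: 2 set). f i) = f 0 + f 1"
  by (simp add: UNIV_2_eq_0_1)

lemma mat2_nth: "mat2 a b c d $ i $ j = (if i = 0 then (if j = 0 then a else b) else (if j = 0 then c else d))"
  by (simp add: mat2_def)

lemma cmat2_eq_iff: "(A :: cmat2) = B \<longleftrightarrow> A$0$0 = B$0$0 \<and> A$0$1 = B$0$1 \<and> A$1$0 = B$1$0 \<and> A$1$1 = B$1$1"
  by (simp add: vec_eq_iff UNIV_2_eq_0_1 ball_simps[symmetric])

lemma mat2_cases:
  obtains a b c d where "(A :: cmat2) = mat2 a b c d"
  by (metis cmat2_eq_iff mat2_nth zero_neq_one)

lemma mat2_eq_iff: "mat2 a b c d = mat2 a' b' c' d' \<longleftrightarrow> a = a' \<and> b = b' \<and> c = c' \<and> d = d'"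
  by (simp add: cmat2_eq_iff mat2_nth)

lemma mat2_mult: "mat2 a b c d ** mat2 e f g h = mat2 (a*e + b*g) (a*f + b*h) (c*e + d*g) (c*f + d*h)"
  by (simp add: cmat2_eq_iff mat2_nth matrix_matrix_mult_def sum_UNIV_2)

lemma mat2_add: "mat2 a b c d + mat2 e f g h = mat2 (a + e) (b + f) (c + g) (d + h)"
  by (simp add: cmat2_eq_iff mat2_nth)

lemma mat2_diff: "mat2 a b c d - mat2 e f g h = mat2 (a - e) (b - f) (c - g) (d - h)"
  by (simp add: cmat2_eq_iff mat2_nth)

lemma cscale_mat2: "cscale k (mat2 a b c d) = mat2 (k*a) (k*b) (k*c) (k*d)"
  by (simp add: cmat2_eq_iff mat2_nth cscale_def)

lemma cscale_nth: "cscale k A $ i $ j = k * A $ i $ j"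
  by (simp add: cscale_def)

lemma scaleR_mat2: "r *\<^sub>R mat2 a b c d = mat2 (r *\<^sub>R a) (r *\<^sub>R b) (r *\<^sub>R c) (r *\<^sub>R d)"
  by (simp add: cmat2_eq_iff mat2_nth)

lemma adj_mat2: "adj (mat2 a b c d) = mat2 (cnj a) (cnj c) (cnj b) (cnj d)"
  by (simp add: cmat2_eq_iff mat2_nth adj_def)

lemma mat_1_eq_mat2: "mat 1 = mat2 1 0 0 1"
  by (simp add: cmat2_eq_iff mat2_nth mat_def)

lemma zero_eq_mat2: "0 = mat2 0 0 0 0"
  by (simp add: cmat2_eq_iff mat2_nth)

lemmas mat2_simps = mat2_mult mat2_add mat2_diff cscale_mat2 scaleR_mat2 adj_mat2

lemma sum_mat2:
  "(\<Sum>i<(n :: nat). mat2 (w i) (x i) (y i) (z i)) = mat2 (\<Sum>i<n. w i) (\<Sum>i<n. x i) (\<Sum>i<n. y i) (\<Sum>i<n. z i)"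
  by (induction n) (simp_all add: zero_eq_mat2[symmetric] mat2_add)

lemma sums_mat2:
  assumes "w sums W" "x sums X" "y sums Y" "z sums Z"
  shows "(\<lambda>n. mat2 (w n) (x n) (y n) (z n)) sums mat2 W X Y Z"
  using assms unfolding sums_def sum_mat2 unfolding mat2_def
  by (intro tendsto_vec_lambda) auto

definition phase_covariant :: "real \<Rightarrow> real \<Rightarrow> complex \<Rightarrow> cmat2 \<Rightarrow> cmat2" where
  "phase_covariant \<alpha> \<beta> \<kappa> X = mat2
     (X$0$0 + of_real \<alpha> * (X$1$1 - X$0$0)) (\<kappa> * X$0$1)
     (cnj \<kappa> * X$1$0) (X$1$1 + of_real \<beta> * (X$0$0 - X$1$1))"

lemma phase_covariant_mat2:
  "phase_covariant \<alpha> \<beta> \<kappa> (mat2 a b c d) =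
     mat2 (a + of_real \<alpha> * (d - a)) (\<kappa> * b) (cnj \<kappa> * c) (d + of_real \<beta> * (a - d))"
  by (simp add: phase_covariant_def mat2_nth)

definition coherence_eigenvalue :: "real \<Rightarrow> real \<Rightarrow> real \<Rightarrow> real \<Rightarrow> complex" where
  "coherence_eigenvalue \<omega> gp gm gz = \<i> * of_real \<omega> - of_real ((gp + gm) / 2 + 2 * gz)"

lemma pauli_mat2:
  "sigma_z = mat2 1 0 0 (-1)" "sigma_plus = mat2 0 1 0 0" "sigma_minus = mat2 0 0 1 0"
  by (simp_all add: sigma_z_def sigma_plus_def sigma_minus_def sigma_x_def sigma_y_def mat2_simps mat2_eq_iff)

lemma Ldag_mat2:
  "Ldag \<omega> gp gm gz (mat2 a b c d) =
     mat2 (of_real gm * (d - a)) (coherence_eigenvalue \<omega> gp gm gz * b)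
          (cnj (coherence_eigenvalue \<omega> gp gm gz) * c) (of_real gp * (a - d))"
  by (simp add: Ldag_def coherence_eigenvalue_def pauli_mat2 commutator_def anticommutator_def
      mat2_simps mat2_eq_iff; simp add: algebra_simps)

lemma funpow_Ldag_mat2:
  "(Ldag \<omega> gp gm gz ^^ n) (mat2 a b c d) =
     mat2 (if n = 0 then a else of_real (gm * (- (gp + gm)) ^ (n - 1)) * (d - a))
          (coherence_eigenvalue \<omega> gp gm gz ^ n * b) (cnj (coherence_eigenvalue \<omega> gp gm gz) ^ n * c)
          (if n = 0 then d else of_real (gp * (- (gp + gm)) ^ (n - 1)) * (a - d))"
proof (induction n)
  case 0
  then show ?case by simp
next
  case (Suc n)
  then show ?case
    by (cases n) (simp_all add: Ldag_mat2 mat2_eq_iff algebra_simps)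
qed

definition decay_integral :: "real \<Rightarrow> real \<Rightarrow> real" where
  "decay_integral G t = (if G = 0 then t else (1 - exp (- G * t)) / G)"

lemma decay_integral_0 [simp]: "decay_integral G 0 = 0"
  by (simp add: decay_integral_def)

lemma decay_integral_sums:
  "(\<lambda>n. t ^ Suc n / fact (Suc n) * (- G) ^ n) sums decay_integral G t"
proof (cases "G = 0")
  case True
  have "(\<lambda>n. t ^ Suc n / fact (Suc n) * (- G) ^ n) = (\<lambda>n. if n = 0 then t else 0)"
    using True by (auto simp: fun_eq_iff)
  then show ?thesis
    using True sums_single[of 0 "\<lambda>_. t"] by (simp add: decay_integral_def)
next
  case False
  have "(\<lambda>n. (- G * t) ^ Suc n /\<^sub>R fact (Suc n)) sums (exp (- G * t) - 1)"
    using exp_converges[of "- G * t"] by (subst sums_Suc_iff) simp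
  moreover have "(exp (- G * t) - 1) * (- 1 / G) = decay_integral G t"
    using False by (simp add: decay_integral_def field_simps)
  ultimately have "(\<lambda>n. (- G * t) ^ Suc n /\<^sub>R fact (Suc n) * (- 1 / G)) sums decay_integral G t"
    using sums_mult2 by metis
  moreover have "(\<lambda>n. (- G * t) ^ Suc n /\<^sub>R fact (Suc n) * (- 1 / G)) = (\<lambda>n. t ^ Suc n / fact (Suc n) * (- G) ^ n)"
  proof
    fix n
    have "(- G * t) ^ Suc n = - G * (- G) ^ n * t ^ Suc n"
      by (simp only: power_mult_distrib power_Suc mult_ac)
    then show "(- G * t) ^ Suc n /\<^sub>R fact (Suc n) * (- 1 / G) = t ^ Suc n / fact (Suc n) * (- G) ^ n"
      using False by (simp add: field_simps)
  qed
  ultimately show ?thesis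
    by (simp only:)
qed

lemma population_sums:
  fixes a w :: complex
  shows "(\<lambda>n. (t ^ n / fact n) *\<^sub>R (if n = 0 then a else of_real (g * (- G) ^ (n - 1)) * w))
           sums (a + of_real (g * decay_integral G t) * w)"
proof -
  let ?f = "\<lambda>n. (t ^ n / fact n) *\<^sub>R (if n = 0 then a else of_real (g * (- G) ^ (n - 1)) * w)"
  have "(\<lambda>n. of_real (t ^ Suc n / fact (Suc n) * (- G) ^ n) * (of_real g * w) :: complex)
          sums (of_real (decay_integral G t) * (of_real g * w))"
    by (intro sums_mult2 sums_of_real decay_integral_sums)
  then have "(\<lambda>n. ?f (Suc n)) sums (of_real (g * decay_integral G t) * w)"
    by (simp add: scaleR_conv_of_real mult_ac)
  then have "?f sums (of_real (g * decay_integral G t) * w + ?f 0)"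
    by (subst (asm) sums_Suc_iff)
  then show ?thesis
    by (simp add: add.commute)
qed

lemma exp_series_mult_sums:
  fixes m b :: complex
  shows "(\<lambda>n. (t ^ n / fact n) *\<^sub>R (m ^ n * b)) sums (exp (of_real t * m) * b)"
  using sums_mult2[OF exp_converges[of "of_real t * m"], of b]
  by (simp add: power_mult_distrib scaleR_conv_of_real divide_inverse mult_ac)

lemma expL_Ldag:
  "expL t (Ldag \<omega> gp gm gz) =
     phase_covariant (gm * decay_integral (gp + gm) t) (gp * decay_integral (gp + gm) t)
       (exp (of_real t * coherence_eigenvalue \<omega> gp gm gz))" (is "_ = ?\<Phi>")
proof
  fix X :: cmat2
  obtain a b c d where X: "X = mat2 a b c d" by (rule mat2_cases)
  have cnj_exp: "cnj (exp (of_real t * \<mu>)) = exp (of_real t * cnj \<mu>)" for \<mu>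
    by (simp add: exp_cnj)
  have "(\<lambda>n. (t ^ n / fact n) *\<^sub>R (Ldag \<omega> gp gm gz ^^ n) X) sums ?\<Phi> X"
    unfolding X funpow_Ldag_mat2 scaleR_mat2 phase_covariant_mat2 cnj_exp
    by (intro sums_mat2 population_sums exp_series_mult_sums)
  then show "expL t (Ldag \<omega> gp gm gz) X = ?\<Phi> X"
    unfolding expL_def by (rule sums_unique[symmetric])
qed

lemma cnj_mult_self: "cnj z * z = of_real ((cmod z)\<^sup>2)"
  by (metis complex_norm_square mult.commute)

lemma phase_covariant_schwarz_defect:
  "phase_covariant \<alpha> \<beta> \<kappa> (adj (mat2 a b c d) ** mat2 a b c d)
     - adj (phase_covariant \<alpha> \<beta> \<kappa> (mat2 a b c d)) ** phase_covariant \<alpha> \<beta> \<kappa> (mat2 a b c d)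
   = mat2 (of_real (\<alpha> * (1 - \<alpha>) * (cmod (a - d))\<^sup>2 + (1 - \<alpha> - (cmod \<kappa>)\<^sup>2) * (cmod c)\<^sup>2 + \<alpha> * (cmod b)\<^sup>2))
          (\<kappa> * (of_real \<alpha> * cnj (a - d) * b - of_real \<beta> * cnj c * (a - d)))
          (cnj (\<kappa> * (of_real \<alpha> * cnj (a - d) * b - of_real \<beta> * cnj c * (a - d))))
          (of_real (\<beta> * (1 - \<beta>) * (cmod (a - d))\<^sup>2 + (1 - \<beta> - (cmod \<kappa>)\<^sup>2) * (cmod b)\<^sup>2 + \<beta> * (cmod c)\<^sup>2))"
  unfolding phase_covariant_mat2 mat2_simps mat2_eq_iff
  by (simp add: algebra_simps flip: cnj_mult_self del: of_real_power)

lemma cross_term_le: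
  fixes P R k x y :: real
  assumes "0 \<le> P" "0 \<le> R" "0 \<le> k" "k\<^sup>2 \<le> P * R" "0 \<le> x" "0 \<le> y"
  shows "2 * k * x * y \<le> P * x\<^sup>2 + R * y\<^sup>2"
proof -
  have "k * (x * y) \<le> (sqrt P * sqrt R) * (x * y)"
    using assms by (intro mult_right_mono) (auto simp: real_le_rsqrt simp flip: real_sqrt_mult)
  moreover have "0 \<le> (sqrt P * x - sqrt R * y)\<^sup>2"
    by simp
  then have "2 * (sqrt P * sqrt R) * x * y \<le> P * x\<^sup>2 + R * y\<^sup>2"
    using assms by (simp add: power2_eq_square algebra_simps)
  ultimately show ?thesis
    by (simp add: mult_ac)
qed

lemma psd_hermitian_mat2:
  assumes P: "0 \<le> P" and R: "0 \<le> R" and Q: "(cmod Q)\<^sup>2 \<le> P * R"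
  shows "psd (mat2 (of_real P) Q (cnj Q) (of_real R))"
  unfolding psd_def Let_def
proof
  fix v :: "complex^2"
  let ?q = "\<Sum>i\<in>UNIV. cnj (v$i) * (mat2 (of_real P) Q (cnj Q) (of_real R) *v v) $ i"
  define w where "w = cnj (v$0) * Q * v$1"
  have "?q = of_real P * (cnj (v$0) * v$0) + of_real R * (cnj (v$1) * v$1) + (w + cnj w)"
    by (simp add: sum_UNIV_2 matrix_vector_mult_def mat2_nth w_def algebra_simps)
  also have "\<dots> = of_real (P * (cmod (v$0))\<^sup>2 + R * (cmod (v$1))\<^sup>2 + 2 * Re w)"
    by (simp add: cnj_mult_self complex_add_cnj)
  finally have q: "?q = of_real (P * (cmod (v$0))\<^sup>2 + R * (cmod (v$1))\<^sup>2 + 2 * Re w)" .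
  have "- 2 * Re w \<le> 2 * cmod w"
    using abs_Re_le_cmod[of w] by linarith
  also have "\<dots> = 2 * cmod Q * cmod (v$0) * cmod (v$1)"
    by (simp add: w_def norm_mult)
  also have "\<dots> \<le> P * (cmod (v$0))\<^sup>2 + R * (cmod (v$1))\<^sup>2"
    using P R Q by (intro cross_term_le) auto
  finally show "Im ?q = 0 \<and> 0 \<le> Re ?q"
    unfolding q by simp
qed

lemma psd_diagonal_nonneg:
  assumes "psd M"
  shows "0 \<le> Re (M$0$0)" "0 \<le> Re (M$1$1)"
proof -
  have "(\<Sum>i\<in>UNIV. cnj (axis j 1 $ i) * (M *v axis j 1) $ i) = M$j$j" for j
    using exhaust_2_zero_one[of j] by (auto simp: sum_UNIV_2 matrix_vector_mult_def axis_def)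
  then show "0 \<le> Re (M$0$0)" "0 \<le> Re (M$1$1)"
    using assms unfolding psd_def Let_def by metis+
qed

lemma schwarz_defect_det_bound:
  fixes a b l B C Z :: real
  assumes "0 \<le> b" "b \<le> a" "0 \<le> l" "l \<le> 1 - a"
  shows "l * (a * B * Z + b * C * Z)\<^sup>2
           \<le> (a * (1 - a) * Z\<^sup>2 + (1 - a - l) * C\<^sup>2 + a * B\<^sup>2) * (b * (1 - b) * Z\<^sup>2 + (1 - b - l) * B\<^sup>2 + b * C\<^sup>2)"
proof -
  define d where "d = 1 - a - l"
  have "0 \<le> d" "0 \<le> 1 - a" "0 \<le> a" "0 \<le> a - b" "0 \<le> 1 - b"
    using assms by (auto simp: d_def)
  then have "0 \<le> a * b * ((1 - a) * Z\<^sup>2 - B * C)\<^sup>2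
      + (a - b) * (a * b * (1 - a) * Z ^ 4 + a * b * Z\<^sup>2 * B\<^sup>2 + (1 - a) * b * Z\<^sup>2 * C\<^sup>2 + a * B ^ 4)
      + d * (a * ((1 - a) * Z\<^sup>2 + B\<^sup>2) * B\<^sup>2 + (b * (1 - b) * Z\<^sup>2 + (a - b) * B\<^sup>2 + b * C\<^sup>2) * C\<^sup>2)
      + d * d * B\<^sup>2 * C\<^sup>2 + d * (a * B + b * C)\<^sup>2 * Z\<^sup>2"
    using assms by (intro add_nonneg_nonneg mult_nonneg_nonneg) (auto simp: zero_le_even_power)
  also have "\<dots> = (a * (1 - a) * Z\<^sup>2 + (1 - a - l) * C\<^sup>2 + a * B\<^sup>2) * (b * (1 - b) * Z\<^sup>2 + (1 - b - l) * B\<^sup>2 + b * C\<^sup>2)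
      - l * (a * B * Z + b * C * Z)\<^sup>2"
    unfolding d_def by algebra
  finally show ?thesis
    by simp
qed

lemma unital_schwarz_phase_covariant:
  assumes "0 \<le> \<alpha>" "0 \<le> \<beta>" "(cmod \<kappa>)\<^sup>2 \<le> 1 - \<alpha>" "(cmod \<kappa>)\<^sup>2 \<le> 1 - \<beta>"
  shows "unital_schwarz (phase_covariant \<alpha> \<beta> \<kappa>)"
  unfolding unital_schwarz_def
proof (intro conjI allI)
  fix X Y
  show "phase_covariant \<alpha> \<beta> \<kappa> (X + Y) = phase_covariant \<alpha> \<beta> \<kappa> X + phase_covariant \<alpha> \<beta> \<kappa> Y"
    by (simp add: phase_covariant_def mat2_add mat2_eq_iff algebra_simps)
next
  fix c X
  show "phase_covariant \<alpha> \<beta> \<kappa> (cscale c X) = cscale c (phase_covariant \<alpha> \<beta> \<kappa> X)"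
    by (simp add: phase_covariant_def cscale_mat2 mat2_eq_iff cscale_nth algebra_simps)
next
  show "phase_covariant \<alpha> \<beta> \<kappa> (mat 1) = mat 1"
    by (simp add: mat_1_eq_mat2 phase_covariant_mat2)
next
  fix X
  obtain a b c d where X: "X = mat2 a b c d" by (rule mat2_cases)
  define L Z B C where "L = (cmod \<kappa>)\<^sup>2" and "Z = cmod (a - d)" and "B = cmod b" and "C = cmod c"
  define P where "P = \<alpha> * (1 - \<alpha>) * Z\<^sup>2 + (1 - \<alpha> - L) * C\<^sup>2 + \<alpha> * B\<^sup>2"
  define R where "R = \<beta> * (1 - \<beta>) * Z\<^sup>2 + (1 - \<beta> - L) * B\<^sup>2 + \<beta> * C\<^sup>2"
  define Q where "Q = \<kappa> * (of_real \<alpha> * cnj (a - d) * b - of_real \<beta> * cnj c * (a - d))"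
  have L: "0 \<le> L" "L \<le> 1 - \<alpha>" "L \<le> 1 - \<beta>"
    using assms by (auto simp: L_def)
  have "0 \<le> P" "0 \<le> R"
    unfolding P_def R_def using assms L by (intro add_nonneg_nonneg mult_nonneg_nonneg; simp)+
  moreover have "(cmod Q)\<^sup>2 \<le> P * R"
  proof -
    have "cmod Q \<le> cmod \<kappa> * (\<alpha> * B * Z + \<beta> * C * Z)"
      unfolding Q_def norm_mult
      using assms norm_triangle_ineq4[of "of_real \<alpha> * cnj (a - d) * b" "of_real \<beta> * cnj c * (a - d)"]
      by (intro mult_left_mono) (simp_all add: norm_mult Z_def B_def C_def mult_ac flip: complex_cnj_diff)
    then have "(cmod Q)\<^sup>2 \<le> L * (\<alpha> * B * Z + \<beta> * C * Z)\<^sup>2"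
      by (simp add: L_def power_mono flip: power_mult_distrib)
    also have "\<dots> \<le> P * R"
    proof (cases "\<beta> \<le> \<alpha>")
      case True
      then show ?thesis
        unfolding P_def R_def using assms L by (intro schwarz_defect_det_bound) auto
    next
      case False
      then have "L * (\<beta> * C * Z + \<alpha> * B * Z)\<^sup>2 \<le> R * P"
        unfolding P_def R_def using assms L by (intro schwarz_defect_det_bound) auto
      then show ?thesis
        by (simp add: add.commute mult.commute)
    qed
    finally show ?thesis .
  qed
  ultimately show "psd (phase_covariant \<alpha> \<beta> \<kappa> (adj X ** X)
                       - adj (phase_covariant \<alpha> \<beta> \<kappa> X) ** phase_covariant \<alpha> \<beta> \<kappa> X)"
    unfolding X phase_covariant_schwarz_defect P_def R_def Q_def L_def Z_def B_def C_def
    by (rule psd_hermitian_mat2)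
qed

lemma unital_schwarz_phase_covariant_iff:
  "unital_schwarz (phase_covariant \<alpha> \<beta> \<kappa>)
     \<longleftrightarrow> 0 \<le> \<alpha> \<and> 0 \<le> \<beta> \<and> (cmod \<kappa>)\<^sup>2 \<le> 1 - \<alpha> \<and> (cmod \<kappa>)\<^sup>2 \<le> 1 - \<beta>"
proof
  assume "unital_schwarz (phase_covariant \<alpha> \<beta> \<kappa>)"
  then have defect_psd: "psd (phase_covariant \<alpha> \<beta> \<kappa> (adj (mat2 a b c d) ** mat2 a b c d)
      - adj (phase_covariant \<alpha> \<beta> \<kappa> (mat2 a b c d)) ** phase_covariant \<alpha> \<beta> \<kappa> (mat2 a b c d))"
    for a b c d
    unfolding unital_schwarz_def by blast
  have "0 \<le> \<alpha> * (1 - \<alpha>)" "0 \<le> \<beta> * (1 - \<beta>)"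
    using psd_diagonal_nonneg[OF defect_psd[of 1 0 0 0]]
    unfolding phase_covariant_schwarz_defect mat2_nth by simp_all
  moreover have "(cmod \<kappa>)\<^sup>2 \<le> 1 - \<alpha>"
    using psd_diagonal_nonneg(1)[OF defect_psd[of 0 0 1 0]]
    unfolding phase_covariant_schwarz_defect mat2_nth by simp
  moreover have "(cmod \<kappa>)\<^sup>2 \<le> 1 - \<beta>"
    using psd_diagonal_nonneg(2)[OF defect_psd[of 0 1 0 0]]
    unfolding phase_covariant_schwarz_defect mat2_nth by simp
  ultimately show "0 \<le> \<alpha> \<and> 0 \<le> \<beta> \<and> (cmod \<kappa>)\<^sup>2 \<le> 1 - \<alpha> \<and> (cmod \<kappa>)\<^sup>2 \<le> 1 - \<beta>"
    using zero_le_power2[of "cmod \<kappa>"] by (auto simp: zero_le_mult_iff)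
qed (use unital_schwarz_phase_covariant in blast)

lemma decay_integral_has_real_derivative:
  "(decay_integral G has_real_derivative exp (- G * t)) (at t)"
proof (cases "G = 0")
  case True
  then show ?thesis
    by (simp add: decay_integral_def[abs_def])
next
  case False
  have "((\<lambda>t. (1 - exp (- G * t)) / G) has_real_derivative exp (- G * t)) (at t)"
    using False by (auto intro!: derivative_eq_intros)
  then show ?thesis
    using False by (simp add: decay_integral_def[abs_def])
qed

lemma decay_integral_pos:
  assumes "0 < t"
  shows "0 < decay_integral G t"
proof -
  have "0 < G \<Longrightarrow> exp (- G * t) < 1" "G < 0 \<Longrightarrow> 1 < exp (- G * t)"
    using assms by (simp_all add: mult_neg_pos)
  then show ?thesis
    using assms by (cases G "0 :: real" rule: linorder_cases) (auto simp: decay_integral_def divide_neg_neg)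
qed

lemma decay_integral_nonneg: "0 \<le> t \<Longrightarrow> 0 \<le> decay_integral G t"
  using decay_integral_pos[of t G] by (cases "t = 0") (auto simp: decay_integral_def)

lemma exp_le_one_minus_decay_integral:
  assumes "0 \<le> a" "0 \<le> b" "0 \<le> a + c" "0 \<le> t"
  shows "exp (- (a + b + c) * t) \<le> 1 - b * decay_integral (a + b) t"
proof (cases "a + b = 0")
  case True
  then have "a = 0" "b = 0"
    using assms by auto
  then show ?thesis
    using assms by (simp add: decay_integral_def mult_nonneg_nonneg)
next
  case False
  define G where "G = a + b"
  then have "0 < G"
    using False assms by simp
  have "exp (- (a + b + c) * t) \<le> exp ((1 - b / G) *\<^sub>R 0 + (b / G) *\<^sub>R (- G * t))"
    using assms \<open>0 < G\<close> mult_nonneg_nonneg[of "a + c" t] by (simp add: algebra_simps)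
  also have "\<dots> \<le> (1 - b / G) * exp 0 + (b / G) * exp (- G * t)"
    using assms \<open>0 < G\<close> by (intro convex_onD[OF exp_convex]) (auto simp: G_def)
  also have "\<dots> = 1 - b * decay_integral (a + b) t"
    using \<open>0 < G\<close> unfolding G_def[symmetric]
    by (simp add: decay_integral_def diff_divide_distrib algebra_simps)
  finally show ?thesis .
qed

lemma exists_one_minus_decay_integral_less_exp:
  assumes "a + c < 0"
  obtains t where "0 < t" "1 - b * decay_integral (a + b) t < exp (- (a + b + c) * t)"
proof -
  define h where "h t = 1 - b * decay_integral (a + b) t - exp (- (a + b + c) * t)" for t
  have "(h has_real_derivative (- b * exp (- (a + b) * 0) + (a + b + c) * exp (- (a + b + c) * 0))) (at 0)"
    unfolding h_def by (auto intro!: derivative_eq_intros decay_integral_has_real_derivative)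
  then have "(h has_real_derivative a + c) (at 0)"
    by simp
  then obtain d where "0 < d" and "\<And>t. 0 < t \<Longrightarrow> t < d \<Longrightarrow> h t < h 0"
    using DERIV_neg_dec_right[OF _ assms] by force
  then have "h (d / 2) < h 0"
    by simp
  moreover have "h 0 = 0"
    by (simp add: h_def)
  ultimately show ?thesis
    using \<open>0 < d\<close> by (intro that[of "d / 2"]) (simp_all add: h_def)
qed

lemma cmod_exp_coherence_eigenvalue:
  "(cmod (exp (of_real t * coherence_eigenvalue \<omega> gp gm gz)))\<^sup>2 = exp (- (gp + gm + 4 * gz) * t)"
  by (simp add: coherence_eigenvalue_def power2_eq_square flip: exp_add) (simp add: algebra_simps)

lemma schwarz_conditions_for_all_times_iff:
  fixes a b c :: real
  defines "f \<equiv> decay_integral (a + b)" and "E \<equiv> \<lambda>t. exp (- (a + b + c) * t)"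
  shows "(\<forall>t\<ge>0. 0 \<le> b * f t \<and> 0 \<le> a * f t \<and> E t \<le> 1 - b * f t \<and> E t \<le> 1 - a * f t)
           \<longleftrightarrow> 0 \<le> a \<and> 0 \<le> b \<and> 0 \<le> a + c \<and> 0 \<le> b + c"
proof
  assume H: "\<forall>t\<ge>0. 0 \<le> b * f t \<and> 0 \<le> a * f t \<and> E t \<le> 1 - b * f t \<and> E t \<le> 1 - a * f t"
  then have "0 \<le> a * f 1" "0 \<le> b * f 1"
    by simp_all
  then have "0 \<le> a" "0 \<le> b"
    using decay_integral_pos[of 1 "a + b"] by (simp_all add: f_def zero_le_mult_iff)
  moreover have "0 \<le> x + c" if "x + y = a + b" and "\<forall>t\<ge>0. E t \<le> 1 - y * f t" for x y
  proof (rule ccontr)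
    assume "\<not> 0 \<le> x + c"
    then obtain t where "0 < t" "1 - y * decay_integral (x + y) t < exp (- (x + y + c) * t)"
      by (meson not_le exists_one_minus_decay_integral_less_exp)
    moreover have "exp (- (x + y + c) * t) \<le> 1 - y * decay_integral (x + y) t"
      using that \<open>0 < t\<close> by (simp add: f_def E_def)
    ultimately show False
      by linarith
  qed
  then have "0 \<le> a + c" "0 \<le> b + c"
    using H by (simp_all add: add.commute)
  ultimately show "0 \<le> a \<and> 0 \<le> b \<and> 0 \<le> a + c \<and> 0 \<le> b + c"
    by simp
next
  assume "0 \<le> a \<and> 0 \<le> b \<and> 0 \<le> a + c \<and> 0 \<le> b + c"
  then show "\<forall>t\<ge>0. 0 \<le> b * f t \<and> 0 \<le> a * f t \<and> E t \<le> 1 - b * f t \<and> E t \<le> 1 - a * f t"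
    using exp_le_one_minus_decay_integral[of a b c] exp_le_one_minus_decay_integral[of b a c]
    by (auto simp: f_def E_def decay_integral_nonneg add.commute add.left_commute)
qed

theorem mainTheorem9:
  fixes \<omega> gp gm gz :: real
  defines "Gam_T \<equiv> (gp + gm) / 2 + 2 * gz"
    and "Gam_L \<equiv> gp + gm"
    and "\<delta> \<equiv> gp - gm"
  shows "(\<forall>t\<ge>0. unital_schwarz (expL t (Ldag \<omega> gp gm gz)))
         \<longleftrightarrow> (Gam_L \<ge> \<bar>\<delta>\<bar> \<and> (Gam_L - \<bar>\<delta>\<bar>) / 2 + 2 * Gam_T - Gam_L \<ge> 0)"
proof -
  have "(\<forall>t\<ge>0. unital_schwarz (expL t (Ldag \<omega> gp gm gz)))
      \<longleftrightarrow> (\<forall>t\<ge>0. 0 \<le> gm * decay_integral (gp + gm) t \<and> 0 \<le> gp * decay_integral (gp + gm) t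
             \<and> exp (- (gp + gm + 4 * gz) * t) \<le> 1 - gm * decay_integral (gp + gm) t
             \<and> exp (- (gp + gm + 4 * gz) * t) \<le> 1 - gp * decay_integral (gp + gm) t)"
    by (simp only: expL_Ldag unital_schwarz_phase_covariant_iff cmod_exp_coherence_eigenvalue)
  also have "\<dots> \<longleftrightarrow> 0 \<le> gp \<and> 0 \<le> gm \<and> 0 \<le> gp + 4 * gz \<and> 0 \<le> gm + 4 * gz"
    by (rule schwarz_conditions_for_all_times_iff)
  also have "\<dots> \<longleftrightarrow> Gam_L \<ge> \<bar>\<delta>\<bar> \<and> (Gam_L - \<bar>\<delta>\<bar>) / 2 + 2 * Gam_T - Gam_L \<ge> 0"
    unfolding Gam_T_def Gam_L_def \<delta>_def by (auto simp: abs_if field_simps)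
  finally show ?thesis .
qed

end
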